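(* Let $M$ be a smooth manifold of dimension $n$ and let $\dot x^i=v^i$, $\dot v^i=\Phi^i(x^1,\ldots,x^n,v^1,\ldots,v^n)$ be a Newtonian dynamical system on $M$. In each local chart define $\Gamma^k_{ij}=-\tfrac12\,\partial^2\Phi^k/\partial v^i\partial v^j$. Then $\Gamma^k_{ij}=\Gamma^k_{ji}$, and under every change of local coordinates $\tilde x=\tilde x(x)$ these functions satisfy $$\Gamma^k_{ij}=\sum_{m,a,c}S^k_mT^a_iT^c_j\tilde\Gamma^m_{ac}+\sum_mS^k_m\frac{\partial T^m_i}{\partial x^j},$$ where $S^i_j=\partial x^i/\partial\tilde x^j$, $T^i_j=\partial\tilde x^i/\partial x^j$ and $\tilde\Gamma$ is computed in the new chart at the corresponding point $(\tilde x,\tilde v)$, $\tilde v^i=\sum_jT^i_jv^j$; i.e. they are the components of a symmetric extended affine connection (in $\mathbf v$-representation) canonically associated with the system.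
   Context: A Newtonian dynamical system on $M$ is a smooth vector field on the tangent bundle $TM$ which in the induced coordinates $(x,v)$ reads $\sum_iv^i\partial/\partial x^i+\sum_i\Phi^i(x,v)\partial/\partial v^i$; equivalently, under a change of coordinates the functions $\Phi^i$ transform as $\tilde\Phi^i=\sum_jT^i_j\Phi^j+\sum_{j,k}(\partial T^i_j/\partial x^k)v^jv^k$. *)

theory Defs
  imports "HOL-Analysis.Analysis"
begin

definition dirderiv :: "('a::real_normed_vector \<Rightarrow> 'b::real_normed_vector) \<Rightarrow> 'a \<Rightarrow> 'a \<Rightarrow> 'b" where
  "dirderiv f u p = vector_derivative (\<lambda>t. f (p + t *\<^sub>R u)) (at 0)"

text \<open>C^k on a set S (meant for open S): differentiable with all partial derivatives
  (along the standard basis) of class C^(k-1).\<close>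
fun Ck_on :: "nat \<Rightarrow> 'a::euclidean_space set \<Rightarrow> ('a \<Rightarrow> 'b::real_normed_vector) \<Rightarrow> bool" where
  "Ck_on 0 S f = continuous_on S f"
| "Ck_on (Suc k) S f = (f differentiable_on S \<and> (\<forall>b\<in>Basis. Ck_on k S (\<lambda>p. dirderiv f b p)))"

definition smooth_on :: "'a::euclidean_space set \<Rightarrow> ('a \<Rightarrow> 'b::real_normed_vector) \<Rightarrow> bool" where
  "smooth_on S f = (\<forall>k. Ck_on k S f)"

text \<open>Jacobian matrix T^i_j(x) = d F^i / d x^j of a coordinate change F.\<close>
definition jac :: "(real^'n \<Rightarrow> real^'n) \<Rightarrow> real^'n \<Rightarrow> 'n \<Rightarrow> 'n \<Rightarrow> real" where
  "jac F x i j = dirderiv (\<lambda>y. F y $ i) (axis j 1) x"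

definition matvec :: "('n \<Rightarrow> 'n \<Rightarrow> real) \<Rightarrow> real^'n \<Rightarrow> real^'n" where
  "matvec A v = (\<chi> i. \<Sum>j\<in>UNIV. A i j * v $ j)"

definition Gamma :: "((real^'n) \<times> (real^'n) \<Rightarrow> real^'n) \<Rightarrow> 'n \<Rightarrow> 'n \<Rightarrow> 'n \<Rightarrow> (real^'n) \<times> (real^'n) \<Rightarrow> real" where
  "Gamma Phi k i j p = - (1/2) *
     dirderiv (\<lambda>q. dirderiv (\<lambda>r. Phi r $ k) (0, axis j 1) q) (0, axis i 1) p"

end

theory Submission
  imports Defs
begin

(* Fix a point x of the chart and regard both force fields as functions of the velocity alone.
   The inhomogeneous term of the transformation law is the quadratic form
   v |-> sum_{j,k} (d T^m_j / d x^k) v^j v^k, so differentiating the law twice in v gives,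
   by the chain rule,
     sum_{a,c} T^a_i T^c_j d^2 Phit^m / dv^a dv^c = sum_l T^m_l d^2 Phi^l / dv^i dv^j
                                                 + d T^m_i / dx^j + d T^m_j / dx^i.
   The two last terms agree because second partials of F commute, and contracting with
   S = T^(-1) (the chain rule applied to G o F = id) gives the formula. Symmetry of Gamma, like
   that of the second partials of F, is Schwarz's theorem: by the mean value theorem applied
   twice, the mixed second difference quotient of a C^2 function tends to either mixed partial. *)

section \<open>Directional derivatives\<close>

lemma dirderiv_has_derivative:
  assumes "(f has_derivative f') (at p)"
  shows "dirderiv f u p = f' u"
proof -
  have "((\<lambda>t::real. p + t *\<^sub>R u) has_derivative (\<lambda>t. t *\<^sub>R u)) (at 0)"
    by (auto intro!: derivative_eq_intros)
  from has_derivative_compose[OF this, of f f'] assms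
  have "((\<lambda>t. f (p + t *\<^sub>R u)) has_derivative (\<lambda>t. f' (t *\<^sub>R u))) (at 0)"
    by simp
  then show ?thesis
    using linear_scale[OF has_derivative_linear[OF assms]]
    by (simp add: dirderiv_def vector_derivative_at has_vector_derivative_def)
qed

lemma dirderiv_cong_open:
  assumes "open S" "p \<in> S" "\<And>q. q \<in> S \<Longrightarrow> f q = g q"
  shows "dirderiv f u p = dirderiv g u p"
proof -
  have line_open: "open ((\<lambda>t::real. p + t *\<^sub>R u) -` S)"
    by (rule open_vimage[OF assms(1)]) (auto intro!: continuous_intros)
  have transfer: "((\<lambda>t. g' (p + t *\<^sub>R u)) has_vector_derivative D) (at 0)"
    if "((\<lambda>t. f' (p + t *\<^sub>R u)) has_vector_derivative D) (at 0)"
      and "\<And>q. q \<in> S \<Longrightarrow> f' q = g' q" for f' g' :: "_ \<Rightarrow> 'b" and D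
    by (rule has_vector_derivative_transform_within_open[OF that(1) line_open]) (use assms(2) that(2) in auto)
  have "((\<lambda>t. f (p + t *\<^sub>R u)) has_vector_derivative D) (at 0) \<longleftrightarrow>
        ((\<lambda>t. g (p + t *\<^sub>R u)) has_vector_derivative D) (at 0)" for D
    using transfer[of f _ g] transfer[of g _ f] assms(3) by metis
  then show ?thesis by (simp add: dirderiv_def vector_derivative_def)
qed

lemma has_derivative_vec_nth:
  "(f has_derivative f') F \<Longrightarrow> ((\<lambda>x. f x $ i) has_derivative (\<lambda>h. f' h $ i)) F"
  by (rule bounded_linear.has_derivative[OF bounded_linear_vec_nth])

lemma dirderiv_vec_nth:
  fixes f :: "'a::real_normed_vector \<Rightarrow> real^'m"
  assumes "f differentiable (at p)"
  shows "dirderiv (\<lambda>q. f q $ l) u p = dirderiv f u p $ l"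
proof -
  obtain f' where f': "(f has_derivative f') (at p)"
    using assms by (auto simp: differentiable_def)
  show ?thesis
    using dirderiv_has_derivative[OF f'] dirderiv_has_derivative[OF has_derivative_vec_nth[OF f']]
    by simp
qed

lemma dirderiv_Pair_right: "dirderiv g (0, u) (x, w) = dirderiv (\<lambda>w. g (x, w)) u w"
  by (simp add: dirderiv_def)

lemma differentiable_vec_nth:
  fixes f :: "'a::real_normed_vector \<Rightarrow> real^'m"
  shows "f differentiable (at p within S) \<Longrightarrow> (\<lambda>q. f q $ l) differentiable (at p within S)"
  using has_derivative_vec_nth by (fastforce simp: differentiable_def)

lemma differentiable_Pair_right:
  "g differentiable (at (x, w)) \<Longrightarrow> (\<lambda>w. g (x, w)) differentiable (at w)"
  by (rule differentiable_compose[of g "\<lambda>w. (x, w)"]) (auto intro!: derivative_eq_intros simp: differentiable_def)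

lemma Ck_on_cong:
  assumes "open S" "\<And>x. x \<in> S \<Longrightarrow> f x = g x" "Ck_on k S f"
  shows "Ck_on k S g"
  using assms(2,3)
proof (induction k arbitrary: f g)
  case 0
  then show ?case using continuous_on_cong by force
next
  case (Suc k)
  then have "f differentiable_on S" and Ck: "\<And>b. b \<in> Basis \<Longrightarrow> Ck_on k S (dirderiv f b)"
    by auto
  have "g differentiable_on S"
    unfolding differentiable_on_def
  proof
    fix x
    assume "x \<in> S"
    with \<open>f differentiable_on S\<close> show "g differentiable (at x within S)"
      using differentiable_transform_within[OF _ zero_less_one] Suc.prems(1)
      unfolding differentiable_on_def by blast
  qed
  moreover have "Ck_on k S (dirderiv g b)" if "b \<in> Basis" for b
    by (rule Suc.IH[OF _ Ck[OF that]]) (rule dirderiv_cong_open[OF assms(1) _ Suc.prems(1)])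
  ultimately show ?case
    by simp
qed

lemma Ck_on_vec_nth:
  fixes f :: "'a::euclidean_space \<Rightarrow> real^'m"
  assumes "open S" "Ck_on k S f"
  shows "Ck_on k S (\<lambda>x. f x $ l)"
  using assms(2)
proof (induction k arbitrary: f)
  case 0
  then show ?case by (auto intro: continuous_intros)
next
  case (Suc k)
  then have diff: "f differentiable_on S"
    and IH: "\<And>b. b \<in> Basis \<Longrightarrow> Ck_on k S (\<lambda>p. dirderiv f b p $ l)"
    by auto
  have "dirderiv f b p $ l = dirderiv (\<lambda>x. f x $ l) b p" if "p \<in> S" for b p
    using diff that dirderiv_vec_nth differentiable_on_eq_differentiable_at[OF assms(1)] by metis
  with IH diff show ?case
    by (auto intro: Ck_on_cong[OF assms(1), of "\<lambda>p. dirderiv f _ p $ l"] differentiable_vec_nth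
        simp: differentiable_on_def)
qed

section \<open>Schwarz's theorem\<close>

lemma has_real_derivative_dirderiv_line:
  fixes f :: "'a::real_normed_vector \<Rightarrow> real"
  assumes "f differentiable (at (p + t *\<^sub>R u))"
  shows "((\<lambda>s. f (p + s *\<^sub>R u)) has_real_derivative dirderiv f u (p + t *\<^sub>R u)) (at t)"
proof -
  obtain f' where f': "(f has_derivative f') (at (p + t *\<^sub>R u))"
    using assms by (auto simp: differentiable_def)
  have "((\<lambda>s. p + s *\<^sub>R u) has_derivative (\<lambda>s. s *\<^sub>R u)) (at t)"
    by (auto intro!: derivative_eq_intros)
  from has_derivative_compose[OF this f']
  have "((\<lambda>s. f (p + s *\<^sub>R u)) has_derivative (\<lambda>s. f' (s *\<^sub>R u))) (at t)" .
  moreover have "(\<lambda>s. f' (s *\<^sub>R u)) = (\<lambda>s. dirderiv f u (p + t *\<^sub>R u) * s)"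
    using linear_scale[OF has_derivative_linear[OF f']]
    by (simp add: dirderiv_has_derivative[OF f'] mult.commute)
  ultimately show ?thesis
    by (simp add: has_field_derivative_def)
qed

lemma second_difference_mean_value:
  fixes f :: "'a::real_normed_vector \<Rightarrow> real"
  assumes "0 < h"
    and diff: "\<And>s t. 0 \<le> s \<Longrightarrow> s \<le> h \<Longrightarrow> 0 \<le> t \<Longrightarrow> t \<le> h \<Longrightarrow>
      f differentiable (at (p + s *\<^sub>R u + t *\<^sub>R w)) \<and>
      dirderiv f u differentiable (at (p + s *\<^sub>R u + t *\<^sub>R w))"
  obtains \<sigma> \<tau> where "0 < \<sigma>" "\<sigma> < h" "0 < \<tau>" "\<tau> < h"
    "f (p + h *\<^sub>R u + h *\<^sub>R w) - f (p + h *\<^sub>R u) - f (p + h *\<^sub>R w) + f p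
      = h * h * dirderiv (dirderiv f u) w (p + \<sigma> *\<^sub>R u + \<tau> *\<^sub>R w)"
proof -
  have swap: "p + h *\<^sub>R w + s *\<^sub>R u = p + s *\<^sub>R u + h *\<^sub>R w" for s
    by (simp add: algebra_simps)
  define \<phi> where "\<phi> s = f (p + h *\<^sub>R w + s *\<^sub>R u) - f (p + s *\<^sub>R u)" for s
  have "DERIV \<phi> s :> dirderiv f u (p + h *\<^sub>R w + s *\<^sub>R u) - dirderiv f u (p + s *\<^sub>R u)"
    if "0 \<le> s" "s \<le> h" for s
    unfolding \<phi>_def
  proof (intro DERIV_diff has_real_derivative_dirderiv_line)
    show "f differentiable (at (p + h *\<^sub>R w + s *\<^sub>R u))"
      using diff[of s h] that \<open>0 < h\<close> by (simp add: swap)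
    show "f differentiable (at (p + s *\<^sub>R u))"
      using diff[of s 0] that by simp
  qed
  from MVT2[OF \<open>0 < h\<close> this] obtain \<sigma> where \<sigma>: "0 < \<sigma>" "\<sigma> < h"
    and mvt_\<sigma>: "\<phi> h - \<phi> 0
      = h * (dirderiv f u (p + h *\<^sub>R w + \<sigma> *\<^sub>R u) - dirderiv f u (p + \<sigma> *\<^sub>R u))"
    by auto
  define \<psi> where "\<psi> t = dirderiv f u (p + \<sigma> *\<^sub>R u + t *\<^sub>R w)" for t
  have "DERIV \<psi> t :> dirderiv (dirderiv f u) w (p + \<sigma> *\<^sub>R u + t *\<^sub>R w)"
    if "0 \<le> t" "t \<le> h" for t
    unfolding \<psi>_def using diff[of \<sigma> t] that \<sigma>
    by (auto intro!: has_real_derivative_dirderiv_line)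
  from MVT2[OF \<open>0 < h\<close> this] obtain \<tau> where \<tau>: "0 < \<tau>" "\<tau> < h"
    and mvt_\<tau>: "\<psi> h - \<psi> 0 = h * dirderiv (dirderiv f u) w (p + \<sigma> *\<^sub>R u + \<tau> *\<^sub>R w)"
    by auto
  have "\<phi> h - \<phi> 0 = h * (\<psi> h - \<psi> 0)"
    using mvt_\<sigma> by (simp add: \<psi>_def swap)
  also have "\<phi> h - \<phi> 0 = f (p + h *\<^sub>R u + h *\<^sub>R w) - f (p + h *\<^sub>R u) - f (p + h *\<^sub>R w) + f p"
    by (simp add: \<phi>_def swap)
  finally show ?thesis
    using that \<sigma> \<tau> mvt_\<tau> by simp
qed

lemma eventually_square_in_ball:
  fixes p u w :: "'a::real_normed_vector"
  assumes "0 < r"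
  shows "\<forall>\<^sub>F h in at_right 0. \<forall>s\<in>{0..h}. \<forall>t\<in>{0..h}. p + s *\<^sub>R u + t *\<^sub>R w \<in> ball p r"
proof -
  define N where "N = norm u + norm w + 1"
  have "N > 0"
    unfolding N_def by (simp add: add_nonneg_pos)
  have "p + s *\<^sub>R u + t *\<^sub>R w \<in> ball p r"
    if "h \<in> {0<..<r / N}" "s \<in> {0..h}" "t \<in> {0..h}" for h s t
  proof -
    have "dist (p + s *\<^sub>R u + t *\<^sub>R w) p \<le> s * norm u + t * norm w"
      using norm_triangle_ineq[of "s *\<^sub>R u" "t *\<^sub>R w"] that by (simp add: dist_norm add.assoc)
    also have "\<dots> \<le> h * norm u + h * norm w"
      using that by (intro add_mono mult_right_mono) auto
    also have "\<dots> \<le> h * N"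
      using that by (simp add: N_def distrib_left)
    also have "\<dots> < r"
      using that \<open>N > 0\<close> by (simp add: pos_less_divide_eq)
    finally show ?thesis
      by (simp add: dist_commute)
  qed
  then show ?thesis
    using eventually_at_right_real[of 0 "r / N"] assms \<open>N > 0\<close>
    by (auto elim!: eventually_mono)
qed

lemma second_difference_tendsto:
  fixes f :: "'a::real_normed_vector \<Rightarrow> real"
  assumes S: "open S" "p \<in> S"
    and diff: "f differentiable_on S" "dirderiv f u differentiable_on S"
    and cont: "isCont (dirderiv (dirderiv f u) w) p"
  shows "((\<lambda>h. (f (p + h *\<^sub>R u + h *\<^sub>R w) - f (p + h *\<^sub>R u) - f (p + h *\<^sub>R w) + f p) / h\<^sup>2)
    \<longlongrightarrow> dirderiv (dirderiv f u) w p) (at_right 0)"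
proof (rule tendstoI)
  fix e :: real
  assume "0 < e"
  let ?D = "dirderiv (dirderiv f u) w"
  obtain d1 where "d1 > 0" and d1: "\<And>q. dist q p < d1 \<Longrightarrow> dist (?D q) (?D p) < e"
    using cont \<open>0 < e\<close> unfolding continuous_at_eps_delta by metis
  obtain d2 where "d2 > 0" and d2: "ball p d2 \<subseteq> S"
    using S openE by metis
  have diff_at: "f differentiable (at q) \<and> dirderiv f u differentiable (at q)" if "q \<in> S" for q
    using diff that differentiable_on_eq_differentiable_at[OF S(1)] by blast
  have "\<forall>\<^sub>F h in at_right 0. 0 < h \<and>
      (\<forall>s\<in>{0..h}. \<forall>t\<in>{0..h}. p + s *\<^sub>R u + t *\<^sub>R w \<in> ball p (min d1 d2))"
    using \<open>d1 > 0\<close> \<open>d2 > 0\<close>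
    by (intro eventually_conj[OF eventually_at_right_less eventually_square_in_ball]) simp
  then show "\<forall>\<^sub>F h in at_right 0. dist ((f (p + h *\<^sub>R u + h *\<^sub>R w) - f (p + h *\<^sub>R u)
    - f (p + h *\<^sub>R w) + f p) / h\<^sup>2) (?D p) < e"
  proof (rule eventually_mono, elim conjE)
    fix h :: real
    assume "0 < h" and square: "\<forall>s\<in>{0..h}. \<forall>t\<in>{0..h}. p + s *\<^sub>R u + t *\<^sub>R w \<in> ball p (min d1 d2)"
    have "f differentiable (at (p + s *\<^sub>R u + t *\<^sub>R w)) \<and>
      dirderiv f u differentiable (at (p + s *\<^sub>R u + t *\<^sub>R w))"
      if "0 \<le> s" "s \<le> h" "0 \<le> t" "t \<le> h" for s t
      using square that d2 by (intro diff_at) auto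
    then obtain \<sigma> \<tau> where "0 < \<sigma>" "\<sigma> < h" "0 < \<tau>" "\<tau> < h"
      and mv: "f (p + h *\<^sub>R u + h *\<^sub>R w) - f (p + h *\<^sub>R u) - f (p + h *\<^sub>R w) + f p
        = h * h * ?D (p + \<sigma> *\<^sub>R u + \<tau> *\<^sub>R w)"
      using second_difference_mean_value[OF \<open>0 < h\<close>] by blast
    then have "dist (p + \<sigma> *\<^sub>R u + \<tau> *\<^sub>R w) p < d1"
      using square by (auto simp: dist_commute)
    then show "dist ((f (p + h *\<^sub>R u + h *\<^sub>R w) - f (p + h *\<^sub>R u)
      - f (p + h *\<^sub>R w) + f p) / h\<^sup>2) (?D p) < e"
      using d1 \<open>0 < h\<close> unfolding mv by (simp add: power2_eq_square)
  qed
qed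

lemma dirderiv_commute:
  fixes f :: "'a::real_normed_vector \<Rightarrow> real"
  assumes "open S" "p \<in> S" "f differentiable_on S"
    and "dirderiv f u differentiable_on S" "dirderiv f w differentiable_on S"
    and "isCont (dirderiv (dirderiv f u) w) p" "isCont (dirderiv (dirderiv f w) u) p"
  shows "dirderiv (dirderiv f u) w p = dirderiv (dirderiv f w) u p"
proof -
  let ?\<Delta> = "\<lambda>h. (f (p + h *\<^sub>R u + h *\<^sub>R w) - f (p + h *\<^sub>R u) - f (p + h *\<^sub>R w) + f p) / h\<^sup>2"
  have "(?\<Delta> \<longlongrightarrow> dirderiv (dirderiv f u) w p) (at_right 0)"
    using second_difference_tendsto[OF assms(1-4,6)] .
  moreover have "(?\<Delta> \<longlongrightarrow> dirderiv (dirderiv f w) u p) (at_right 0)"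
    using second_difference_tendsto[OF assms(1-3,5,7)] by (simp add: algebra_simps)
  ultimately show ?thesis
    by (rule tendsto_unique[OF trivial_limit_at_right_real])
qed

lemma Ck_on_2_dirderiv_commute:
  fixes f :: "'a::euclidean_space \<Rightarrow> real^'m"
  assumes "open S" "p \<in> S" "Ck_on 2 S f" "u \<in> Basis" "w \<in> Basis"
  shows "dirderiv (\<lambda>q. dirderiv (\<lambda>r. f r $ l) u q) w p
    = dirderiv (\<lambda>q. dirderiv (\<lambda>r. f r $ l) w q) u p"
proof -
  let ?g = "\<lambda>r. f r $ l"
  have "Ck_on (Suc (Suc 0)) S ?g"
    using Ck_on_vec_nth[OF assms(1,3)] by (simp add: numeral_2_eq_2)
  then have "?g differentiable_on S" "dirderiv ?g u differentiable_on S" "dirderiv ?g w differentiable_on S"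
    and "continuous_on S (dirderiv (dirderiv ?g u) w)" "continuous_on S (dirderiv (dirderiv ?g w) u)"
    using assms(4,5) by auto
  moreover have "isCont h p" if "continuous_on S h" for h :: "'a \<Rightarrow> real"
    using that assms(1,2) continuous_on_eq_continuous_at by blast
  ultimately show ?thesis
    by (simp add: dirderiv_commute[OF assms(1,2)])
qed

section \<open>Second partial derivatives of functions on \<open>real^'n\<close>\<close>

definition twice_partially_differentiable :: "(real^'n \<Rightarrow> real) \<Rightarrow> bool" where
  "twice_partially_differentiable g \<longleftrightarrow>
    (\<forall>w. g differentiable (at w)) \<and> (\<forall>b w. dirderiv g (axis b 1) differentiable (at w))"

definition hessian :: "(real^'n \<Rightarrow> real) \<Rightarrow> 'n \<Rightarrow> 'n \<Rightarrow> real^'n \<Rightarrow> real" where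
  "hessian g i j v = dirderiv (dirderiv g (axis j 1)) (axis i 1) v"

lemma dirderiv_add:
  assumes "f differentiable (at v)" "g differentiable (at v)"
  shows "dirderiv (\<lambda>w. f w + g w) u v = dirderiv f u v + dirderiv g u v"
proof -
  obtain f' g' where f': "(f has_derivative f') (at v)" and g': "(g has_derivative g') (at v)"
    using assms by (auto simp: differentiable_def)
  have "((\<lambda>w. f w + g w) has_derivative (\<lambda>h. f' h + g' h)) (at v)"
    using f' g' by (rule has_derivative_add)
  from dirderiv_has_derivative[OF this] show ?thesis
    by (simp add: dirderiv_has_derivative[OF f'] dirderiv_has_derivative[OF g'])
qed

lemma dirderiv_linear_combination:
  fixes g :: "'i \<Rightarrow> 'a::real_normed_vector \<Rightarrow> real"
  assumes "finite I" "\<And>l. l \<in> I \<Longrightarrow> g l differentiable (at v)"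
  shows "dirderiv (\<lambda>w. \<Sum>l\<in>I. c l * g l w) u v = (\<Sum>l\<in>I. c l * dirderiv (g l) u v)"
proof -
  obtain g' where g': "\<And>l. l \<in> I \<Longrightarrow> (g l has_derivative g' l) (at v)"
    using assms(2) unfolding differentiable_def by metis
  then have "((\<lambda>w. \<Sum>l\<in>I. c l * g l w) has_derivative (\<lambda>h. \<Sum>l\<in>I. c l * g' l h)) (at v)"
    by (intro has_derivative_sum has_derivative_mult_right)
  from dirderiv_has_derivative[OF this] show ?thesis
    by (simp add: dirderiv_has_derivative[OF g'])
qed

lemma twice_partially_differentiable_linear_combination:
  assumes "finite I" "\<And>l. l \<in> I \<Longrightarrow> twice_partially_differentiable (g l)"
  shows "twice_partially_differentiable (\<lambda>w. \<Sum>l\<in>I. c l * g l w)"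
proof -
  have "dirderiv (\<lambda>w. \<Sum>l\<in>I. c l * g l w) (axis b 1) = (\<lambda>w. \<Sum>l\<in>I. c l * dirderiv (g l) (axis b 1) w)"
    for b using assms by (auto simp: twice_partially_differentiable_def intro: dirderiv_linear_combination)
  then show ?thesis
    using assms by (auto simp: twice_partially_differentiable_def intro!: differentiable_sum differentiable_mult)
qed

lemma hessian_linear_combination:
  assumes "finite I" "\<And>l. l \<in> I \<Longrightarrow> twice_partially_differentiable (g l)"
  shows "hessian (\<lambda>w. \<Sum>l\<in>I. c l * g l w) i j v = (\<Sum>l\<in>I. c l * hessian (g l) i j v)"
proof -
  have "dirderiv (\<lambda>w. \<Sum>l\<in>I. c l * g l w) (axis j 1) = (\<lambda>w. \<Sum>l\<in>I. c l * dirderiv (g l) (axis j 1) w)"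
    using assms by (auto simp: twice_partially_differentiable_def intro: dirderiv_linear_combination)
  then show ?thesis
    using assms unfolding hessian_def
    by (simp add: twice_partially_differentiable_def dirderiv_linear_combination)
qed

lemma hessian_add:
  assumes "twice_partially_differentiable f" "twice_partially_differentiable g"
  shows "hessian (\<lambda>w. f w + g w) i j v = hessian f i j v + hessian g i j v"
proof -
  have "dirderiv (\<lambda>w. f w + g w) (axis j 1) = (\<lambda>w. dirderiv f (axis j 1) w + dirderiv g (axis j 1) w)"
    by (intro ext dirderiv_add) (use assms in \<open>auto simp: twice_partially_differentiable_def\<close>)
  then show ?thesis
    using assms unfolding hessian_def
    by (simp add: twice_partially_differentiable_def dirderiv_add)
qed

lemma sum_mult_axis: "(\<Sum>a\<in>UNIV. f a * axis j (1::real) $ a) = f j"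
  by (simp add: axis_def if_distrib[of "(*) _"] cong: if_cong)

lemma has_derivative_linear_form:
  fixes c :: "'n::finite \<Rightarrow> real"
  shows "((\<lambda>w. \<Sum>b\<in>UNIV. c b * w $ b) has_derivative (\<lambda>h. \<Sum>b\<in>UNIV. c b * h $ b)) (at v)"
  by (intro has_derivative_sum has_derivative_mult_right has_derivative_vec_nth[OF has_derivative_ident])

lemma has_derivative_quadratic_form:
  fixes C :: "'n::finite \<Rightarrow> 'n \<Rightarrow> real"
  shows "((\<lambda>w. \<Sum>a\<in>UNIV. \<Sum>b\<in>UNIV. C a b * w $ a * w $ b) has_derivative
    (\<lambda>h. \<Sum>a\<in>UNIV. \<Sum>b\<in>UNIV. C a b * (h $ a * w $ b + w $ a * h $ b))) (at w)"
  by (auto intro!: derivative_eq_intros has_derivative_vec_nth has_derivative_ident sum.cong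
      simp: algebra_simps)

lemma dirderiv_quadratic_form_axis:
  fixes C :: "'n::finite \<Rightarrow> 'n \<Rightarrow> real"
  shows "dirderiv (\<lambda>w. \<Sum>a\<in>UNIV. \<Sum>b\<in>UNIV. C a b * w $ a * w $ b) (axis j 1) w
    = (\<Sum>b\<in>UNIV. (C j b + C b j) * w $ b)"
proof -
  have "dirderiv (\<lambda>w. \<Sum>a\<in>UNIV. \<Sum>b\<in>UNIV. C a b * w $ a * w $ b) (axis j 1) w
    = (\<Sum>a\<in>UNIV. \<Sum>b\<in>UNIV. C a b * (axis j 1 $ a * w $ b + w $ a * axis j 1 $ b))"
    by (rule dirderiv_has_derivative[OF has_derivative_quadratic_form])
  also have "\<dots> = (\<Sum>a\<in>UNIV. (\<Sum>b\<in>UNIV. C a b * w $ b) * axis j 1 $ a)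
      + (\<Sum>a\<in>UNIV. \<Sum>b\<in>UNIV. (C a b * w $ a) * axis j 1 $ b)"
    by (simp add: sum.distrib sum_distrib_left sum_distrib_right algebra_simps)
  also have "\<dots> = (\<Sum>b\<in>UNIV. C j b * w $ b) + (\<Sum>a\<in>UNIV. C a j * w $ a)"
    by (simp only: sum_mult_axis)
  finally show ?thesis
    by (simp add: algebra_simps sum.distrib)
qed

lemma twice_partially_differentiable_quadratic_form:
  "twice_partially_differentiable (\<lambda>w. \<Sum>a\<in>UNIV. \<Sum>b\<in>UNIV. C a b * w $ a * w $ b)"
  unfolding twice_partially_differentiable_def dirderiv_quadratic_form_axis
  by (auto intro: differentiableI[OF has_derivative_quadratic_form] differentiableI[OF has_derivative_linear_form])

lemma hessian_quadratic_form:
  "hessian (\<lambda>w. \<Sum>a\<in>UNIV. \<Sum>b\<in>UNIV. C a b * w $ a * w $ b) i j v = C i j + C j i"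
  unfolding hessian_def dirderiv_quadratic_form_axis
  by (simp add: dirderiv_has_derivative[OF has_derivative_linear_form] sum_mult_axis)

lemma has_derivative_matvec: "(matvec A has_derivative matvec A) (at v)"
proof -
  have "matvec A = (*v) (\<chi> i j. A i j)"
    by (simp add: fun_eq_iff matvec_def matrix_vector_mult_def)
  then show ?thesis
    by (simp add: bounded_linear_imp_has_derivative)
qed

lemma matvec_axis_nth: "matvec A (axis j 1) $ c = A c j"
  by (simp add: matvec_def sum_mult_axis)

lemma dirderiv_compose_matvec:
  fixes g :: "real^'n \<Rightarrow> real"
  assumes "g differentiable (at (matvec A v))"
  shows "dirderiv (\<lambda>w. g (matvec A w)) (axis j 1) v
    = (\<Sum>c\<in>UNIV. A c j * dirderiv g (axis c 1) (matvec A v))"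
proof -
  obtain g' where g': "(g has_derivative g') (at (matvec A v))"
    using assms by (auto simp: differentiable_def)
  have "dirderiv (\<lambda>w. g (matvec A w)) (axis j 1) v = g' (matvec A (axis j 1))"
    by (rule dirderiv_has_derivative[OF has_derivative_compose[OF has_derivative_matvec g']])
  also have "\<dots> = g' (\<Sum>c\<in>UNIV. A c j *\<^sub>R axis c 1)"
    using basis_expansion[of "matvec A (axis j 1)"]
    by (simp add: matvec_axis_nth scalar_mult_eq_scaleR)
  also have "\<dots> = (\<Sum>c\<in>UNIV. A c j * g' (axis c 1))"
    using has_derivative_linear[OF g'] by (simp add: linear_sum linear_scale)
  finally show ?thesis
    by (simp add: dirderiv_has_derivative[OF g'])
qed

lemma hessian_compose_matvec:
  assumes "twice_partially_differentiable g"
  shows "hessian (\<lambda>w. g (matvec A w)) i j v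
    = (\<Sum>a\<in>UNIV. \<Sum>c\<in>UNIV. A a i * A c j * hessian g a c (matvec A v))"
proof -
  have g: "g differentiable (at w)" "dirderiv g (axis c 1) differentiable (at w)" for c w
    using assms by (auto simp: twice_partially_differentiable_def)
  have "dirderiv (\<lambda>w. g (matvec A w)) (axis j 1)
    = (\<lambda>w. \<Sum>c\<in>UNIV. A c j * dirderiv g (axis c 1) (matvec A w))"
    by (intro ext dirderiv_compose_matvec g)
  then have "hessian (\<lambda>w. g (matvec A w)) i j v
    = (\<Sum>c\<in>UNIV. A c j * dirderiv (\<lambda>w. dirderiv g (axis c 1) (matvec A w)) (axis i 1) v)"
    unfolding hessian_def
    by (simp add: dirderiv_linear_combination differentiable_compose[OF g(2) differentiableI[OF has_derivative_matvec]])
  also have "\<dots> = (\<Sum>c\<in>UNIV. A c j * (\<Sum>a\<in>UNIV. A a i * hessian g a c (matvec A v)))"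
    by (simp add: dirderiv_compose_matvec g hessian_def)
  also have "\<dots> = (\<Sum>a\<in>UNIV. \<Sum>c\<in>UNIV. A a i * A c j * hessian g a c (matvec A v))"
    by (subst sum.swap) (simp add: sum_distrib_left mult_ac)
  finally show ?thesis .
qed

section \<open>Change of coordinates\<close>

lemma jac_eq_derivative:
  assumes "(F has_derivative F') (at x)"
  shows "jac F x i j = F' (axis j 1) $ i"
  unfolding jac_def
  using dirderiv_vec_nth[OF differentiableI[OF assms]] dirderiv_has_derivative[OF assms] by simp

lemma jac_inverse:
  assumes "open U" "x \<in> U" "F differentiable (at x)" "G differentiable (at (F x))"
    and GF: "\<And>y. y \<in> U \<Longrightarrow> G (F y) = y"
  shows "(\<Sum>m\<in>UNIV. jac G (F x) k m * jac F x m l) = (if k = l then 1 else 0)"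
proof -
  obtain F' G' where F': "(F has_derivative F') (at x)" and G': "(G has_derivative G') (at (F x))"
    using assms(3,4) by (auto simp: differentiable_def)
  have "((\<lambda>y. G (F y)) has_derivative (\<lambda>h. G' (F' h))) (at x)"
    by (rule has_derivative_compose[OF F' G'])
  then have "((\<lambda>y. y) has_derivative (\<lambda>h. G' (F' h))) (at x)"
    by (rule has_derivative_transform_within_open[OF _ assms(1,2)]) (simp add: GF)
  then have G'F': "G' (F' h) = h" for h
    using has_derivative_unique[OF has_derivative_ident] by metis
  have "(\<Sum>m\<in>UNIV. jac G (F x) k m * jac F x m l) = (\<Sum>m\<in>UNIV. F' (axis l 1) $ m * G' (axis m 1) $ k)"
    by (simp add: jac_eq_derivative[OF F'] jac_eq_derivative[OF G'] mult.commute)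
  also have "\<dots> = G' (\<Sum>m\<in>UNIV. F' (axis l 1) $ m *\<^sub>R axis m 1) $ k"
    using has_derivative_linear[OF G'] by (simp add: linear_sum linear_scale sum_component)
  also have "(\<Sum>m\<in>UNIV. F' (axis l 1) $ m *\<^sub>R axis m 1) = F' (axis l 1)"
    using basis_expansion[of "F' (axis l 1)"] by (simp add: scalar_mult_eq_scaleR)
  finally show ?thesis
    by (simp add: G'F' axis_def)
qed

lemma twice_partially_differentiable_slice:
  fixes g :: "'a::euclidean_space \<times> (real^'n) \<Rightarrow> real"
  assumes "open S" "Ck_on 2 S g" "\<And>w. (x, w) \<in> S"
  shows "twice_partially_differentiable (\<lambda>w. g (x, w))"
proof -
  from assms(2) have "g differentiable_on S" "\<And>b. b \<in> Basis \<Longrightarrow> dirderiv g b differentiable_on S"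
    by (auto simp: numeral_2_eq_2)
  then have "g differentiable (at (x, w))" "dirderiv g (0, axis b 1) differentiable (at (x, w))" for b w
    using assms(3) by (auto simp: differentiable_on_eq_differentiable_at[OF assms(1)] Basis_prod_def)
  moreover have "dirderiv (\<lambda>w. g (x, w)) (axis b 1) = (\<lambda>w. dirderiv g (0, axis b 1) (x, w))" for b
    by (simp add: fun_eq_iff dirderiv_Pair_right)
  ultimately show ?thesis
    by (simp add: twice_partially_differentiable_def differentiable_Pair_right)
qed

lemma Gamma_eq_hessian: "Gamma Phi k i j (x, v) = - (1/2) * hessian (\<lambda>w. Phi (x, w) $ k) i j v"
  by (simp add: Gamma_def hessian_def dirderiv_Pair_right)

lemma hessian_change_of_variables:
  fixes \<phi> \<psi> :: "'n::finite \<Rightarrow> real^'n \<Rightarrow> real"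
  assumes "\<And>l. twice_partially_differentiable (\<phi> l)" "\<And>m. twice_partially_differentiable (\<psi> m)"
    and inverse: "\<And>k l. (\<Sum>m\<in>UNIV. S k m * A m l) = (if k = l then 1 else 0)"
    and C_sym: "\<And>m a b. C m a b = C m b a"
    and rel: "\<And>m w. \<psi> m (matvec A w)
      = (\<Sum>l\<in>UNIV. A m l * \<phi> l w) + (\<Sum>a\<in>UNIV. \<Sum>b\<in>UNIV. C m a b * w $ a * w $ b)"
  shows "hessian (\<phi> k) i j v
    = (\<Sum>m\<in>UNIV. \<Sum>a\<in>UNIV. \<Sum>c\<in>UNIV. S k m * A a i * A c j * hessian (\<psi> m) a c (matvec A v))
      - 2 * (\<Sum>m\<in>UNIV. S k m * C m i j)"
proof -
  have transformed: "(\<Sum>a\<in>UNIV. \<Sum>c\<in>UNIV. A a i * A c j * hessian (\<psi> m) a c (matvec A v))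
    = (\<Sum>l\<in>UNIV. A m l * hessian (\<phi> l) i j v) + 2 * C m i j" for m
  proof -
    have "(\<Sum>a\<in>UNIV. \<Sum>c\<in>UNIV. A a i * A c j * hessian (\<psi> m) a c (matvec A v))
      = hessian (\<lambda>w. \<psi> m (matvec A w)) i j v"
      by (rule hessian_compose_matvec[OF assms(2), symmetric])
    also have "(\<lambda>w. \<psi> m (matvec A w))
      = (\<lambda>w. (\<Sum>l\<in>UNIV. A m l * \<phi> l w) + (\<Sum>a\<in>UNIV. \<Sum>b\<in>UNIV. C m a b * w $ a * w $ b))"
      by (simp add: rel)
    also have "hessian \<dots> i j v = (\<Sum>l\<in>UNIV. A m l * hessian (\<phi> l) i j v) + (C m i j + C m j i)"
      using assms(1)
      by (simp add: hessian_add twice_partially_differentiable_linear_combination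
          twice_partially_differentiable_quadratic_form hessian_linear_combination hessian_quadratic_form)
    finally show ?thesis
      using C_sym by simp
  qed
  have "hessian (\<phi> k) i j v = (\<Sum>l\<in>UNIV. (\<Sum>m\<in>UNIV. S k m * A m l) * hessian (\<phi> l) i j v)"
    by (simp add: inverse if_distrib[of "\<lambda>x. x * _"] cong: if_cong)
  also have "\<dots> = (\<Sum>m\<in>UNIV. S k m * (\<Sum>l\<in>UNIV. A m l * hessian (\<phi> l) i j v))"
    unfolding sum_distrib_left sum_distrib_right mult.assoc by (rule sum.swap)
  also have "\<dots> = (\<Sum>m\<in>UNIV. S k m *
      ((\<Sum>a\<in>UNIV. \<Sum>c\<in>UNIV. A a i * A c j * hessian (\<psi> m) a c (matvec A v)) - 2 * C m i j))"
    by (simp add: transformed)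
  finally show ?thesis
    by (simp add: right_diff_distrib sum_subtractf sum_distrib_left mult_ac)
qed

lemma Gamma_change_of_variables:
  fixes Phi Phit :: "(real^'n) \<times> (real^'n) \<Rightarrow> real^'n"
  assumes "\<And>l. twice_partially_differentiable (\<lambda>w. Phi (x, w) $ l)"
    and "\<And>m. twice_partially_differentiable (\<lambda>w. Phit (y, w) $ m)"
    and "\<And>k l. (\<Sum>m\<in>UNIV. S k m * A m l) = (if k = l then 1 else 0)"
    and "\<And>m a b. C m a b = C m b a"
    and "\<And>m w. Phit (y, matvec A w) $ m
      = (\<Sum>l\<in>UNIV. A m l * Phi (x, w) $ l) + (\<Sum>a\<in>UNIV. \<Sum>b\<in>UNIV. C m a b * w $ a * w $ b)"
  shows "Gamma Phi k i j (x, v)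
    = (\<Sum>m\<in>UNIV. \<Sum>a\<in>UNIV. \<Sum>c\<in>UNIV. S k m * A a i * A c j * Gamma Phit m a c (y, matvec A v))
      + (\<Sum>m\<in>UNIV. S k m * C m i j)"
proof -
  let ?H = "\<lambda>m a c. hessian (\<lambda>w. Phit (y, w) $ m) a c (matvec A v)"
  have "hessian (\<lambda>w. Phi (x, w) $ k) i j v
    = (\<Sum>m\<in>UNIV. \<Sum>a\<in>UNIV. \<Sum>c\<in>UNIV. S k m * A a i * A c j * ?H m a c)
      - 2 * (\<Sum>m\<in>UNIV. S k m * C m i j)"
    using hessian_change_of_variables[where \<phi> = "\<lambda>l w. Phi (x, w) $ l" and \<psi> = "\<lambda>m w. Phit (y, w) $ m"]
      assms by blast
  then have "Gamma Phi k i j (x, v)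
    = - (1/2) * (\<Sum>m\<in>UNIV. \<Sum>a\<in>UNIV. \<Sum>c\<in>UNIV. S k m * A a i * A c j * ?H m a c)
      + (\<Sum>m\<in>UNIV. S k m * C m i j)"
    unfolding Gamma_eq_hessian by linarith
  then show ?thesis
    by (simp add: Gamma_eq_hessian sum_distrib_left mult_ac)
qed

theorem theorem4p1:
  fixes U :: "(real^'n) set"
    and F G :: "real^'n \<Rightarrow> real^'n"
    and Phi Phit :: "(real^'n) \<times> (real^'n) \<Rightarrow> real^'n"
  assumes U_open: "open U"
    and FU_open: "open (F ` U)"
    and F_smooth: "smooth_on U F"
    and G_smooth: "smooth_on (F ` U) G"
    and GF: "\<And>x. x \<in> U \<Longrightarrow> G (F x) = x"
    and FG: "\<And>y. y \<in> F ` U \<Longrightarrow> F (G y) = y"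
    and Phi_smooth: "smooth_on (U \<times> UNIV) Phi"
    and Phit_smooth: "smooth_on (F ` U \<times> UNIV) Phit"
    and transf: "\<And>x v i. x \<in> U \<Longrightarrow>
        Phit (F x, matvec (jac F x) v) $ i =
          (\<Sum>j\<in>UNIV. jac F x i j * Phi (x, v) $ j)
          + (\<Sum>j\<in>UNIV. \<Sum>k\<in>UNIV. dirderiv (\<lambda>y. jac F y i j) (axis k 1) x * v $ j * v $ k)"
  shows "\<forall>x\<in>U. \<forall>v k i j.
     Gamma Phi k i j (x, v) = Gamma Phi k j i (x, v) \<and>
     Gamma Phi k i j (x, v) =
       (\<Sum>m\<in>UNIV. \<Sum>a\<in>UNIV. \<Sum>c\<in>UNIV.
          jac G (F x) k m * jac F x a i * jac F x c j * Gamma Phit m a c (F x, matvec (jac F x) v))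
       + (\<Sum>m\<in>UNIV. jac G (F x) k m * dirderiv (\<lambda>y. jac F y m i) (axis j 1) x)"
proof (intro ballI allI conjI)
  fix x v k i j
  assume x: "x \<in> U"
  have C2: "Ck_on 2 U F" "Ck_on 2 (U \<times> UNIV) Phi" "Ck_on 2 (F ` U \<times> UNIV) Phit"
    and G_C1: "Ck_on 1 (F ` U) G"
    using F_smooth Phi_smooth Phit_smooth G_smooth by (auto simp: smooth_on_def)
  have opens: "open (U \<times> (UNIV :: (real^'n) set))" "open (F ` U \<times> (UNIV :: (real^'n) set))"
    using U_open FU_open by (auto intro: open_Times)
  have basis: "axis b 1 \<in> (Basis :: (real^'n) set)" "(0, axis b 1) \<in> (Basis :: ((real^'n) \<times> (real^'n)) set)"
    for b :: 'n
    by (simp_all add: Basis_prod_def)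
  show "Gamma Phi k i j (x, v) = Gamma Phi k j i (x, v)"
    unfolding Gamma_def using Ck_on_2_dirderiv_commute[OF opens(1) _ C2(2) basis(2) basis(2)] x by simp
  have F_diff: "F differentiable (at x)" and G_diff: "G differentiable (at (F x))"
    using C2(1) G_C1 x U_open FU_open
    by (auto simp: numeral_2_eq_2 differentiable_on_eq_differentiable_at)
  show "Gamma Phi k i j (x, v) =
       (\<Sum>m\<in>UNIV. \<Sum>a\<in>UNIV. \<Sum>c\<in>UNIV.
          jac G (F x) k m * jac F x a i * jac F x c j * Gamma Phit m a c (F x, matvec (jac F x) v))
       + (\<Sum>m\<in>UNIV. jac G (F x) k m * dirderiv (\<lambda>y. jac F y m i) (axis j 1) x)"
    by (intro Gamma_change_of_variables
        twice_partially_differentiable_slice[OF opens(1) Ck_on_vec_nth[OF opens(1) C2(2)]]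
        twice_partially_differentiable_slice[OF opens(2) Ck_on_vec_nth[OF opens(2) C2(3)]]
        jac_inverse[OF U_open x F_diff G_diff GF] transf[OF x])
      (auto simp: x jac_def intro: Ck_on_2_dirderiv_commute[OF U_open x C2(1) basis(1) basis(1)])
qed

end
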